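(* Let $(e_n)$ be a uniformly quasi-greedy basic sequence in a Banach lattice $X$, with span $E$, quasi-greedy constant $C_{qg}$ and uniform quasi-greedy constant $C^\vee_{qg}$. Then for every $x\in E$ and every ordered set $A=\{n_1,\dots,n_m\}\subseteq\mathrm{supp}(x)$, $$\|P^\vee_A(x)\|\le 8C_{qg}^2C^\vee_{qg}\,\frac{\max\{|e_n^*(x)|:n\in A\}}{\min\{|e_n^*(x)|:n\in A\}}\,\|x\|.$$
   Context: $(e_n)$ is a semi-normalized basic sequence with biorthogonal functionals $e_n^*$, $\mathrm{supp}(x)=\{n:e_n^*(x)\ne0\}$. For $x\in E$, the natural greedy ordering $\rho$ lists indices by non-increasing $|e_n^*(x)|$ (ties broken by increasing index, range containing the support); $\mathcal{G}_m(x)=\sum_{n=1}^m e^*_{\rho(n)}(x)e_{\rho(n)}$, $\mathcal{G}^\vee_m(x)=\bigvee_{n\le m}|\mathcal{G}_n(x)|$. $C_{qg}=\sup_m\sup_{\|x\|=1}\|\mathcal{G}_m(x)\|$ and $C^\vee_{qg}=\sup_m\sup_{\|x\|=1}\|\mathcal{G}^\vee_m(x)\|$; the sequence is uniformly quasi-greedy if $C^\vee_{qg}<\infty$ (which implies $C_{qg}<\infty$). For an ordered finite set $A=\{n_1,\dots,n_m\}\subseteq\mathbb{N}$ (the order being the listed one), $P^\vee_A(x)=\bigvee_{i=1}^m\big|\sum_{k=1}^i e^*_{n_k}(x)e_{n_k}\big|$. *)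

theory Defs
  imports "HOL-Analysis.Analysis"
begin

definition labs :: "'a::{uminus,sup} \<Rightarrow> 'a" where
  "labs x = sup x (- x)"

class banach_lattice = banach + ordered_real_vector + lattice +
  assumes lattice_norm: "sup x (- x) \<le> sup y (- y) \<Longrightarrow> norm x \<le> norm y"

definition cspan :: "(nat \<Rightarrow> 'a::real_normed_vector) \<Rightarrow> 'a set" where
  "cspan e = closure (span (range e))"

definition semi_normalized :: "(nat \<Rightarrow> 'a::real_normed_vector) \<Rightarrow> bool" where
  "semi_normalized e \<longleftrightarrow> (\<exists>c C. 0 < c \<and> (\<forall>n. c \<le> norm (e n) \<and> norm (e n) \<le> C))"

definition basic_sequence :: "(nat \<Rightarrow> 'a::real_normed_vector) \<Rightarrow> bool" where
  "basic_sequence e \<longleftrightarrow>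
     (\<forall>x\<in>cspan e. \<exists>!a. (\<lambda>N. \<Sum>n<N. a n *\<^sub>R e n) \<longlonglongrightarrow> x)"

definition coef :: "(nat \<Rightarrow> 'a::real_normed_vector) \<Rightarrow> nat \<Rightarrow> 'a \<Rightarrow> real" where
  "coef e n x = (THE a. (\<lambda>N. \<Sum>k<N. a k *\<^sub>R e k) \<longlonglongrightarrow> x) n"

definition supp :: "(nat \<Rightarrow> 'a::real_normed_vector) \<Rightarrow> 'a \<Rightarrow> nat set" where
  "supp e x = {n. coef e n x \<noteq> 0}"

fun greedy_list :: "(nat \<Rightarrow> real) \<Rightarrow> nat \<Rightarrow> nat list" where
  "greedy_list c 0 = []"
| "greedy_list c (Suc m) = greedy_list c m @
     [LEAST n. n \<notin> set (greedy_list c m) \<and>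
        (\<forall>k. k \<notin> set (greedy_list c m) \<longrightarrow> \<bar>c k\<bar> \<le> \<bar>c n\<bar>)]"

definition greedy_ord :: "(nat \<Rightarrow> 'a::real_normed_vector) \<Rightarrow> 'a \<Rightarrow> nat \<Rightarrow> nat" where
  "greedy_ord e x n = greedy_list (\<lambda>k. coef e k x) (Suc n) ! n"

definition greedy_sum :: "(nat \<Rightarrow> 'a::real_normed_vector) \<Rightarrow> nat \<Rightarrow> 'a \<Rightarrow> 'a" where
  "greedy_sum e m x = (\<Sum>n<m. coef e (greedy_ord e x n) x *\<^sub>R e (greedy_ord e x n))"

definition greedy_max :: "(nat \<Rightarrow> 'a::banach_lattice) \<Rightarrow> nat \<Rightarrow> 'a \<Rightarrow> 'a" where
  "greedy_max e m x = Sup_fin ((\<lambda>n. labs (greedy_sum e n x)) ` {1..m})"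

definition C_qg :: "(nat \<Rightarrow> 'a::real_normed_vector) \<Rightarrow> real" where
  "C_qg e = Sup {norm (greedy_sum e m x) | m x. 1 \<le> m \<and> x \<in> cspan e \<and> norm x = 1}"

definition C_uqg :: "(nat \<Rightarrow> 'a::banach_lattice) \<Rightarrow> real" where
  "C_uqg e = Sup {norm (greedy_max e m x) | m x. 1 \<le> m \<and> x \<in> cspan e \<and> norm x = 1}"

definition uniformly_quasi_greedy :: "(nat \<Rightarrow> 'a::banach_lattice) \<Rightarrow> bool" where
  "uniformly_quasi_greedy e \<longleftrightarrow>
     bdd_above {norm (greedy_max e m x) | m x. 1 \<le> m \<and> x \<in> cspan e \<and> norm x = 1}"

text \<open>P^\<or>_A for an ordered finite set A = [n_1,...,n_m].\<close>
definition P_vee :: "(nat \<Rightarrow> 'a::banach_lattice) \<Rightarrow> nat list \<Rightarrow> 'a \<Rightarrow> 'a" where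
  "P_vee e ns x = Sup_fin ((\<lambda>i. labs (\<Sum>k<i. coef e (ns ! k) x *\<^sub>R e (ns ! k))) ` {1..length ns})"

end

(*
  Write a_n = coef e n x, c_n = |a_n| and g_n = sgn(a_n) e_n, so that P^v_A(x) is the maximal
  function of the partial sums of c_n g_n along A. This maximal function is sublinear, so peeling
  off the weights c_n layer by layer bounds ||P^v_A(x)|| by max_A |a_n| times a uniform bound K for
  the sign layers, the maximal functions of the partial sums of sgn(a_n) e_n (n in D) along A, for
  D a subset of A.

  Give the signs on D weights 1 + delta/(j+1) that decrease strictly along A. The prefixes of D
  along A are then greedy sets of the perturbed vector, so the partial sums along A become greedy
  sums, and letting delta -> 0 bounds the layer by C^v_qg ||1_{eps,D}||, where 1_{eps,D} is the sum
  of the signed e_n over D. A similar perturbation makes D a greedy set of 1_{eps,B} + delta 1_{eps,D},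
  with B = {n. alpha <= |a_n|} and alpha = min_A |a_n|, whence ||1_{eps,D}|| <= C_qg ||1_{eps,B}||.
  Finally alpha ||1_{eps,B}|| <= 2 C_qg ||x|| by Abel summation along the greedy ordering of x, which
  lists B first. So K = 2 C_qg^2 C^v_qg ||x|| / alpha, and the estimate holds with 2 in place of 8.
*)

theory Submission
  imports Defs "HOL-Library.Lattice_Algebras"
begin

section \<open>The lattice modulus\<close>

context banach_lattice
begin
subclass lattice_ab_group_add ..
end

lemma labs_ge: "v \<le> labs v" "- v \<le> labs (v::'a::banach_lattice)"
  by (simp_all add: labs_def)

lemma labs_le_iff: "labs (v::'a::banach_lattice) \<le> w \<longleftrightarrow> v \<le> w \<and> - v \<le> w"
  by (simp add: labs_def)

lemma labs_nonneg: "0 \<le> labs (v::'a::banach_lattice)"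
proof -
  have "v + - v \<le> labs v + labs v" using labs_ge by (rule add_mono)
  thus ?thesis by simp
qed

lemma labs_eq_self: "0 \<le> (v::'a::banach_lattice) \<Longrightarrow> labs v = v"
  by (simp add: labs_def sup_absorb1 minus_le_self_iff)

lemma labs_labs: "labs (labs (v::'a::banach_lattice)) = labs v"
  by (rule labs_eq_self[OF labs_nonneg])

lemma labs_minus: "labs (- (v::'a::banach_lattice)) = labs v"
  by (simp add: labs_def sup_commute)

lemma labs_zero: "labs (0::'a::banach_lattice) = 0"
  by (simp add: labs_def)

lemma labs_triangle: "labs ((v::'a::banach_lattice) + w) \<le> labs v + labs w"
proof -
  have "v + w \<le> labs v + labs w" "- v + - w \<le> labs v + labs w"
    by (intro add_mono labs_ge)+
  thus ?thesis by (simp add: labs_le_iff)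
qed

lemma labs_diff_le: "labs ((v::'a::banach_lattice) - w) \<le> labs v + labs w"
  using labs_triangle[of v "- w"] by (simp add: labs_minus)

lemma labs_sum_le: "labs (\<Sum>n\<in>F. (f n::'a::banach_lattice)) \<le> (\<Sum>n\<in>F. labs (f n))"
  by (induction F rule: infinite_finite_induct)
    (auto simp: labs_zero intro: order_trans[OF labs_triangle] add_left_mono)

lemma scaleR_sup:
  assumes "0 \<le> r" shows "r *\<^sub>R sup v w = sup (r *\<^sub>R v) (r *\<^sub>R (w::'a::banach_lattice))"
proof (cases "r = 0")
  case False
  with assms have r: "0 < r" by simp
  have "sup v w \<le> inverse r *\<^sub>R sup (r *\<^sub>R v) (r *\<^sub>R w)"
  proof (rule sup_least)
    show "v \<le> inverse r *\<^sub>R sup (r *\<^sub>R v) (r *\<^sub>R w)"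
      using scaleR_left_mono[OF sup_ge1, of "inverse r" "r *\<^sub>R v" "r *\<^sub>R w"] r by simp
    show "w \<le> inverse r *\<^sub>R sup (r *\<^sub>R v) (r *\<^sub>R w)"
      using scaleR_left_mono[OF sup_ge2, of "inverse r" "r *\<^sub>R w" "r *\<^sub>R v"] r by simp
  qed
  from scaleR_left_mono[OF this, of r] r
  have "r *\<^sub>R sup v w \<le> sup (r *\<^sub>R v) (r *\<^sub>R w)" by simp
  moreover have "sup (r *\<^sub>R v) (r *\<^sub>R w) \<le> r *\<^sub>R sup v w"
    using r by (intro sup_least scaleR_left_mono) auto
  ultimately show ?thesis by (rule antisym)
qed simp

lemma labs_scaleR: "labs (r *\<^sub>R (v::'a::banach_lattice)) = \<bar>r\<bar> *\<^sub>R labs v"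
proof (cases "0 \<le> r")
  case True thus ?thesis by (simp add: labs_def scaleR_sup)
next
  case False
  have "labs (r *\<^sub>R v) = sup ((- r) *\<^sub>R (- v)) ((- r) *\<^sub>R v)"
    by (simp only: labs_def scaleR_minus_left scaleR_minus_right minus_minus)
  also have "\<dots> = (- r) *\<^sub>R sup (- v) v"
    using False by (intro scaleR_sup[symmetric]) simp
  also have "\<dots> = (- r) *\<^sub>R labs v"
    by (simp only: labs_def sup_commute[of "- v" v])
  finally show ?thesis using False by simp
qed

lemma norm_le_norm_of_labs_le:
  assumes "labs (v::'a::banach_lattice) \<le> w" shows "norm v \<le> norm w"
proof -
  have "labs w = w" using labs_nonneg[of v] assms by (intro labs_eq_self) (rule order_trans)
  thus ?thesis using assms lattice_norm[of v w] by (simp add: labs_def)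
qed

lemma norm_mono_nonneg: "0 \<le> (v::'a::banach_lattice) \<Longrightarrow> v \<le> w \<Longrightarrow> norm v \<le> norm w"
  using norm_le_norm_of_labs_le labs_eq_self by metis

lemma norm_labs: "norm (labs (v::'a::banach_lattice)) = norm v"
proof -
  have "sup (labs v) (- labs v) = sup v (- v)"
    using labs_labs[of v] by (simp only: labs_def[of "labs v"]) (simp add: labs_def)
  thus ?thesis using lattice_norm[of "labs v" v] lattice_norm[of v "labs v"] by simp
qed

section \<open>Maximal functions of partial sums\<close>

lemma sum_lessThan_nth_eq_sum_list_take:
  "i \<le> length xs \<Longrightarrow> (\<Sum>k<i. f (xs ! k)) = sum_list (map f (take i xs))"
  by (simp add: sum_list_sum_nth atLeast0LessThan)

lemma partial_sum_restrict_eq_prefix_sum: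
  assumes "i \<le> length xs"
  obtains J where "J \<le> length (filter P xs)"
    "(\<Sum>k<i. if P (xs ! k) then f (xs ! k) else 0) = (\<Sum>j<J. f (filter P xs ! j))"
proof
  let ?J = "length (filter P (take i xs))"
  have split: "filter P xs = filter P (take i xs) @ filter P (drop i xs)"
    by (metis append_take_drop_id filter_append)
  thus "?J \<le> length (filter P xs)" by (metis le_add1 length_append)
  have "(\<Sum>k<i. if P (xs ! k) then f (xs ! k) else 0) = sum_list (map f (filter P (take i xs)))"
    using assms sum_lessThan_nth_eq_sum_list_take[of i xs "\<lambda>x. if P x then f x else 0"]
    by (simp add: sum_list_map_filter')
  also have "\<dots> = (\<Sum>j<?J. f (filter P xs ! j))"
    using \<open>?J \<le> length (filter P xs)\<close> split
    by (simp add: sum_lessThan_nth_eq_sum_list_take)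
  finally show "(\<Sum>k<i. if P (xs ! k) then f (xs ! k) else 0) = (\<Sum>j<?J. f (filter P xs ! j))" .
qed

lemma sum_set_eq_sum_nth: "distinct xs \<Longrightarrow> (\<Sum>n\<in>set xs. f n) = (\<Sum>j<length xs. f (xs ! j))"
  by (simp add: sum.distinct_set_conv_list sum_lessThan_nth_eq_sum_list_take)

(* P_vee e ns x is sup_partial_sums ns (\<lambda>n. coef e n x *\<^sub>R e n); for ns = [] the value is the
   unspecified Sup_fin {}, hence the hypotheses ns \<noteq> [] below. *)
definition sup_partial_sums :: "nat list \<Rightarrow> (nat \<Rightarrow> 'a::banach_lattice) \<Rightarrow> 'a" where
  "sup_partial_sums ns f = Sup_fin ((\<lambda>i. labs (\<Sum>k<i. f (ns ! k))) ` {1..length ns})"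

lemma labs_partial_sum_le_sup_partial_sums:
  "1 \<le> i \<Longrightarrow> i \<le> length ns \<Longrightarrow> labs (\<Sum>k<i. f (ns ! k)) \<le> sup_partial_sums ns f"
  unfolding sup_partial_sums_def by (intro Sup_fin.coboundedI) auto

lemma sup_partial_sums_le:
  assumes "ns \<noteq> []" "\<And>i. 1 \<le> i \<Longrightarrow> i \<le> length ns \<Longrightarrow> labs (\<Sum>k<i. f (ns ! k)) \<le> b"
  shows "sup_partial_sums ns f \<le> b"
  unfolding sup_partial_sums_def using assms by (intro Sup_fin.boundedI) (auto simp: Suc_le_eq)

lemma sup_partial_sums_nonneg: "ns \<noteq> [] \<Longrightarrow> 0 \<le> sup_partial_sums ns f"
  using labs_partial_sum_le_sup_partial_sums[of 1 ns f] labs_nonneg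
  by (auto simp: Suc_le_eq intro: order_trans)

lemma sup_partial_sums_zero: "ns \<noteq> [] \<Longrightarrow> sup_partial_sums ns (\<lambda>n. 0) = 0"
  using sup_partial_sums_nonneg[of ns "\<lambda>n. 0"]
  by (intro antisym sup_partial_sums_le) (auto simp: labs_zero)

lemma sup_partial_sums_cong:
  "(\<And>n. n \<in> set ns \<Longrightarrow> f n = f' n) \<Longrightarrow> sup_partial_sums ns f = sup_partial_sums ns f'"
  unfolding sup_partial_sums_def
  by (intro arg_cong[where f = Sup_fin] image_cong refl arg_cong[where f = labs] sum.cong) auto

lemma sup_partial_sums_add_le:
  assumes "ns \<noteq> []"
  shows "sup_partial_sums ns (\<lambda>n. f n + g n) \<le> sup_partial_sums ns f + sup_partial_sums ns g"
proof (rule sup_partial_sums_le[OF assms])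
  fix i assume i: "1 \<le> i" "i \<le> length ns"
  have "labs (\<Sum>k<i. f (ns ! k) + g (ns ! k)) \<le> labs (\<Sum>k<i. f (ns ! k)) + labs (\<Sum>k<i. g (ns ! k))"
    unfolding sum.distrib by (rule labs_triangle)
  also have "\<dots> \<le> sup_partial_sums ns f + sup_partial_sums ns g"
    using i by (intro add_mono labs_partial_sum_le_sup_partial_sums)
  finally show "labs (\<Sum>k<i. f (ns ! k) + g (ns ! k)) \<le> \<dots>" .
qed

lemma sup_partial_sums_scaleR_le:
  assumes "ns \<noteq> []" "0 \<le> r"
  shows "sup_partial_sums ns (\<lambda>n. r *\<^sub>R f n) \<le> r *\<^sub>R sup_partial_sums ns f"
proof (rule sup_partial_sums_le[OF assms(1)])
  fix i assume "1 \<le> i" "i \<le> length ns"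
  thus "labs (\<Sum>k<i. r *\<^sub>R f (ns ! k)) \<le> r *\<^sub>R sup_partial_sums ns f"
    using assms(2) labs_partial_sum_le_sup_partial_sums[of i ns f]
    by (simp add: scaleR_sum_right[symmetric] labs_scaleR scaleR_left_mono)
qed

section \<open>Coefficient functionals\<close>

lemma cspan_scaleR: "y \<in> cspan e \<Longrightarrow> r *\<^sub>R y \<in> cspan e"
proof -
  assume "y \<in> cspan e"
  hence "r *\<^sub>R y \<in> (*\<^sub>R) r ` closure (span (range e))" by (auto simp: cspan_def)
  also have "\<dots> = closure ((*\<^sub>R) r ` span (range e))" by (rule closure_scaleR)
  also have "\<dots> \<subseteq> closure (span (range e))" by (intro closure_mono) (auto intro: span_mul)
  finally show ?thesis by (simp add: cspan_def)
qed

lemma sum_in_cspan: "(\<Sum>k\<in>F. c k *\<^sub>R e k) \<in> cspan e"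
proof -
  have "(\<Sum>k\<in>F. c k *\<^sub>R e k) \<in> span (range e)"
    by (intro span_sum span_mul) (auto intro: span_base)
  thus ?thesis unfolding cspan_def using closure_subset by blast
qed

lemma partial_sums_coef_tendsto:
  assumes "basic_sequence e" "y \<in> cspan e"
  shows "(\<lambda>N. \<Sum>k<N. coef e k y *\<^sub>R e k) \<longlonglongrightarrow> y"
proof -
  have "\<exists>!a. (\<lambda>N. \<Sum>k<N. a k *\<^sub>R e k) \<longlonglongrightarrow> y"
    using assms by (simp add: basic_sequence_def)
  from theI'[OF this] show ?thesis by (simp add: coef_def)
qed

lemma coef_eqI:
  assumes "basic_sequence e" "y \<in> cspan e" "(\<lambda>N. \<Sum>k<N. a k *\<^sub>R e k) \<longlonglongrightarrow> y"
  shows "coef e n y = a n"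
proof -
  have unique: "\<exists>!a. (\<lambda>N. \<Sum>k<N. a k *\<^sub>R e k) \<longlonglongrightarrow> y"
    using assms(1,2) by (simp add: basic_sequence_def)
  have "(THE a. (\<lambda>N. \<Sum>k<N. a k *\<^sub>R e k) \<longlonglongrightarrow> y) = a"
    using the1_equality[OF unique] assms(3) by blast
  thus ?thesis by (simp add: coef_def)
qed

lemma coef_scaleR:
  assumes "basic_sequence e" "y \<in> cspan e"
  shows "coef e n (r *\<^sub>R y) = r * coef e n y"
proof (rule coef_eqI[OF assms(1) cspan_scaleR[OF assms(2)]])
  show "(\<lambda>N. \<Sum>k<N. (r * coef e k y) *\<^sub>R e k) \<longlonglongrightarrow> r *\<^sub>R y"
    using tendsto_scaleR[OF tendsto_const partial_sums_coef_tendsto[OF assms]]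
    by (simp add: scaleR_sum_right)
qed

lemma coef_sum:
  assumes "basic_sequence e" "finite F"
  shows "coef e n (\<Sum>k\<in>F. c k *\<^sub>R e k) = (if n \<in> F then c n else 0)"
proof (rule coef_eqI[OF assms(1) sum_in_cspan])
  obtain M where M: "F \<subseteq> {..<M}" using assms(2) finite_nat_bounded by blast
  have "(\<Sum>k<N. (if k \<in> F then c k else 0) *\<^sub>R e k) = (\<Sum>k\<in>F. c k *\<^sub>R e k)" if "M \<le> N" for N
  proof -
    have "(\<Sum>k<N. (if k \<in> F then c k else 0) *\<^sub>R e k) = (\<Sum>k\<in>F. (if k \<in> F then c k else 0) *\<^sub>R e k)"
      using M that by (intro sum.mono_neutral_right) auto
    thus ?thesis by simp
  qed
  thus "(\<lambda>N. \<Sum>k<N. (if k \<in> F then c k else 0) *\<^sub>R e k) \<longlonglongrightarrow> (\<Sum>k\<in>F. c k *\<^sub>R e k)"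
    by (intro tendsto_eventually) (auto simp: eventually_sequentially)
qed

lemma coef_tendsto_zero:
  assumes "basic_sequence e" "semi_normalized e" "y \<in> cspan e"
  shows "(\<lambda>n. coef e n y) \<longlonglongrightarrow> 0"
proof -
  obtain c where c: "0 < c" "\<And>n. c \<le> norm (e n)"
    using assms(2) by (auto simp: semi_normalized_def)
  let ?S = "\<lambda>N. \<Sum>k<N. coef e k y *\<^sub>R e k"
  have "(\<lambda>N. ?S (Suc N) - ?S N) \<longlonglongrightarrow> y - y"
    using partial_sums_coef_tendsto[OF assms(1,3)] by (intro tendsto_diff) (rule LIMSEQ_Suc)
  hence "(\<lambda>N. coef e N y *\<^sub>R e N) \<longlonglongrightarrow> 0" by simp
  hence lim: "(\<lambda>N. norm (coef e N y *\<^sub>R e N) / c) \<longlonglongrightarrow> 0"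
    using tendsto_divide_zero tendsto_norm_zero by blast
  have "\<forall>N. norm (coef e N y) \<le> norm (coef e N y *\<^sub>R e N) / c"
  proof
    fix N
    have "\<bar>coef e N y\<bar> * c \<le> \<bar>coef e N y\<bar> * norm (e N)" using c by (intro mult_left_mono) auto
    thus "norm (coef e N y) \<le> norm (coef e N y *\<^sub>R e N) / c" using c by (simp add: field_simps)
  qed
  from Lim_null_comparison[OF always_eventually[OF this] lim] show ?thesis .
qed

lemma finite_large_coefs:
  assumes "basic_sequence e" "semi_normalized e" "y \<in> cspan e" "0 < a"
  shows "finite {n. a \<le> \<bar>coef e n y\<bar>}"
proof -
  obtain N where "\<forall>n\<ge>N. \<bar>coef e n y\<bar> < a"
    using tendstoD[OF coef_tendsto_zero[OF assms(1-3)] assms(4)] by (auto simp: eventually_sequentially)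
  hence "{n. a \<le> \<bar>coef e n y\<bar>} \<subseteq> {..<N}" by (auto simp: not_less[symmetric])
  thus ?thesis using finite_subset by blast
qed

section \<open>Greedy sets and the natural greedy ordering\<close>

(* Since the inequality is strict, the first card S indices of the greedy ordering are exactly S,
   whatever the tie-breaking. *)
definition strict_greedy_set :: "(nat \<Rightarrow> real) \<Rightarrow> nat set \<Rightarrow> bool" where
  "strict_greedy_set c S \<longleftrightarrow> (\<forall>n\<in>S. \<forall>k. k \<notin> S \<longrightarrow> \<bar>c k\<bar> < \<bar>c n\<bar>)"

lemma length_greedy_list [simp]: "length (greedy_list c i) = i"
  by (induction i) auto

lemma greedy_list_eq_map: "greedy_list c i = map (\<lambda>j. greedy_list c (Suc j) ! j) [0..<i]"
  by (induction i) (auto simp: nth_append)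

lemma greedy_ord_eq_Least:
  assumes "U = greedy_ord e x ` {..<j}"
  shows "greedy_ord e x j =
    (LEAST n. n \<notin> U \<and> (\<forall>k. k \<notin> U \<longrightarrow> \<bar>coef e k x\<bar> \<le> \<bar>coef e n x\<bar>))"
proof -
  have "set (greedy_list (\<lambda>k. coef e k x) j) = U"
    by (subst greedy_list_eq_map) (auto simp: assms greedy_ord_def)
  thus ?thesis by (simp add: greedy_ord_def nth_append)
qed

lemma greedy_ord_step:
  assumes "finite S" and greedy: "strict_greedy_set (\<lambda>k. coef e k x) S"
    and U: "U = greedy_ord e x ` {..<j}" "U \<subseteq> S" "card U < card S"
  shows "greedy_ord e x j \<in> S - U"
    and "\<And>k. k \<notin> U \<Longrightarrow> \<bar>coef e k x\<bar> \<le> \<bar>coef e (greedy_ord e x j) x\<bar>"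
proof -
  let ?c = "\<lambda>k. \<bar>coef e k x\<bar>"
  let ?P = "\<lambda>n. n \<notin> U \<and> (\<forall>k. k \<notin> U \<longrightarrow> ?c k \<le> ?c n)"
  have fin: "finite (S - U)" using assms(1) by blast
  have "S - U \<noteq> {}"
  proof
    assume "S - U = {}"
    hence "S = U" using U(2) by blast
    thus False using U(3) by simp
  qed
  then obtain n0 where n0: "n0 \<in> S - U" "Max (?c ` (S - U)) = ?c n0"
    using obtains_MAX[OF fin] by blast
  have "?P n0"
  proof (intro conjI allI impI)
    fix k assume "k \<notin> U"
    show "?c k \<le> ?c n0"
    proof (cases "k \<in> S")
      case True thus ?thesis using n0(2)[symmetric] fin \<open>k \<notin> U\<close> by simp
    next
      case False
      hence "?c k < ?c n0" using greedy n0(1) by (simp add: strict_greedy_set_def)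
      thus ?thesis by simp
    qed
  qed (use n0 in simp)
  hence P: "?P (greedy_ord e x j)"
    unfolding greedy_ord_eq_Least[OF U(1)] by (rule LeastI)
  have "greedy_ord e x j \<in> S"
  proof (rule ccontr)
    assume "greedy_ord e x j \<notin> S"
    hence "?c (greedy_ord e x j) < ?c n0" using greedy n0(1) by (auto simp: strict_greedy_set_def)
    thus False using P n0(1) by auto
  qed
  thus "greedy_ord e x j \<in> S - U" "\<And>k. k \<notin> U \<Longrightarrow> ?c k \<le> ?c (greedy_ord e x j)"
    using P by auto
qed

lemma greedy_ord_inj_on_subset:
  assumes "finite S" "strict_greedy_set (\<lambda>k. coef e k x) S" "j \<le> card S"
  shows "inj_on (greedy_ord e x) {..<j} \<and> greedy_ord e x ` {..<j} \<subseteq> S"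
  using assms(3)
proof (induction j)
  case (Suc j)
  hence IH: "inj_on (greedy_ord e x) {..<j}" "greedy_ord e x ` {..<j} \<subseteq> S" by simp_all
  hence "card (greedy_ord e x ` {..<j}) < card S" using Suc.prems by (simp add: card_image)
  hence "greedy_ord e x j \<in> S - greedy_ord e x ` {..<j}"
    using greedy_ord_step(1)[OF assms(1,2) refl IH(2)] by blast
  thus ?case using IH by (simp add: lessThan_Suc)
qed simp

lemma bij_betw_greedy_ord:
  assumes "finite S" "strict_greedy_set (\<lambda>k. coef e k x) S"
  shows "bij_betw (greedy_ord e x) {..<card S} S"
proof -
  have inj: "inj_on (greedy_ord e x) {..<card S}" and sub: "greedy_ord e x ` {..<card S} \<subseteq> S"
    using greedy_ord_inj_on_subset[OF assms le_refl] by auto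
  have "card (greedy_ord e x ` {..<card S}) = card S" using inj by (simp add: card_image)
  hence "greedy_ord e x ` {..<card S} = S" using card_subset_eq[OF assms(1) sub] by blast
  thus ?thesis using inj by (simp add: bij_betw_def)
qed

lemma greedy_ord_coef_antimono:
  assumes "finite S" "strict_greedy_set (\<lambda>k. coef e k x) S" "Suc j < card S"
  shows "\<bar>coef e (greedy_ord e x (Suc j)) x\<bar> \<le> \<bar>coef e (greedy_ord e x j) x\<bar>"
proof -
  have inj: "inj_on (greedy_ord e x) {..<Suc (Suc j)}" and sub: "greedy_ord e x ` {..<j} \<subseteq> S"
    using greedy_ord_inj_on_subset[OF assms(1,2), of "Suc (Suc j)"] assms(3) by auto
  have "inj_on (greedy_ord e x) {..<j}" using inj by (rule inj_on_subset) auto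
  hence "card (greedy_ord e x ` {..<j}) < card S" using assms(3) by (simp add: card_image)
  moreover have "greedy_ord e x (Suc j) \<notin> greedy_ord e x ` {..<j}"
  proof
    assume "greedy_ord e x (Suc j) \<in> greedy_ord e x ` {..<j}"
    then obtain i where "i < j" "greedy_ord e x (Suc j) = greedy_ord e x i" by auto
    thus False using inj_onD[OF inj, of "Suc j" i] by simp
  qed
  ultimately show ?thesis using greedy_ord_step(2)[OF assms(1,2) refl sub] by blast
qed

lemma greedy_sum_strict_greedy_set:
  assumes "finite S" "strict_greedy_set (\<lambda>k. coef e k x) S"
  shows "greedy_sum e (card S) x = (\<Sum>n\<in>S. coef e n x *\<^sub>R e n)"
  unfolding greedy_sum_def using sum.reindex_bij_betw[OF bij_betw_greedy_ord[OF assms]]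
  by (simp add: lessThan_atLeast0)

section \<open>The quasi-greedy constants\<close>

lemma greedy_list_cmult: "0 < t \<Longrightarrow> greedy_list (\<lambda>k. t * c k) i = greedy_list c i"
  by (induction i) (simp_all add: abs_mult)

lemma greedy_ord_scaleR:
  assumes "basic_sequence e" "y \<in> cspan e" "0 < t"
  shows "greedy_ord e (t *\<^sub>R y) = greedy_ord e y"
  using greedy_list_cmult[OF assms(3)] by (simp add: greedy_ord_def coef_scaleR[OF assms(1,2)] fun_eq_iff)

lemma greedy_sum_scaleR:
  assumes "basic_sequence e" "y \<in> cspan e" "0 < t"
  shows "greedy_sum e m (t *\<^sub>R y) = t *\<^sub>R greedy_sum e m y"
  by (simp add: greedy_sum_def greedy_ord_scaleR[OF assms] coef_scaleR[OF assms(1,2)] scaleR_sum_right)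

lemma greedy_max_scaleR:
  assumes "basic_sequence e" "y \<in> cspan e" "0 < t" "1 \<le> m"
  shows "greedy_max e m (t *\<^sub>R y) = t *\<^sub>R greedy_max e m y"
proof -
  have "greedy_max e m (t *\<^sub>R y) = Sup_fin ((*\<^sub>R) t ` (\<lambda>n. labs (greedy_sum e n y)) ` {1..m})"
    using assms(3) by (simp add: greedy_max_def greedy_sum_scaleR[OF assms(1-3)] labs_scaleR image_image)
  also have "\<dots> = t *\<^sub>R greedy_max e m y"
    unfolding greedy_max_def using assms(3,4) scaleR_sup[of t]
    by (intro Sup_fin.hom_commute[symmetric]) auto
  finally show ?thesis .
qed

lemma labs_greedy_sum_le_greedy_max:
  assumes "j \<le> m" "1 \<le> m"
  shows "labs (greedy_sum e j y) \<le> greedy_max e m y"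
proof (cases "j = 0")
  case True
  have "labs (greedy_sum e 1 y) \<le> greedy_max e m y"
    unfolding greedy_max_def using assms(2) by (intro Sup_fin.coboundedI) auto
  thus ?thesis using True labs_nonneg[of "greedy_sum e 1 y"] by (simp add: greedy_sum_def labs_zero)
next
  case False
  thus ?thesis unfolding greedy_max_def using assms(1) by (intro Sup_fin.coboundedI) auto
qed

lemma norm_le_Sup_unit_sphere_mult_norm:
  fixes F :: "nat \<Rightarrow> 'a::real_normed_vector \<Rightarrow> 'b::real_normed_vector" and e :: "nat \<Rightarrow> 'a"
  defines "B \<equiv> {norm (F m x) | m x. 1 \<le> m \<and> x \<in> cspan e \<and> norm x = 1}"
  assumes bdd: "bdd_above B"
    and hom: "\<And>m x t. 1 \<le> m \<Longrightarrow> x \<in> cspan e \<Longrightarrow> 0 < t \<Longrightarrow> F m (t *\<^sub>R x) = t *\<^sub>R F m x"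
    and m: "1 \<le> m" and y: "y \<in> cspan e"
  shows "norm (F m y) \<le> Sup B * norm y"
proof (cases "y = 0")
  case True
  have "F m y = 2 *\<^sub>R F m y" using hom[OF m y, of 2] True by simp
  hence "F m y = 0" by (simp add: scaleR_2)
  thus ?thesis using True by simp
next
  case False
  let ?u = "(1 / norm y) *\<^sub>R y"
  have u: "?u \<in> cspan e" "norm ?u = 1" using cspan_scaleR[OF y] False by auto
  have "F m y = norm y *\<^sub>R F m ?u" using hom[OF m u(1), of "norm y"] False by simp
  hence "norm (F m y) = norm y * norm (F m ?u)" by simp
  also have "\<dots> \<le> norm y * Sup B"
  proof (intro mult_left_mono cSup_upper[OF _ bdd])
    show "norm (F m ?u) \<in> B" unfolding B_def using m u by blast
  qed simp
  finally show ?thesis by (simp add: mult.commute)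
qed

lemma norm_greedy_sum_le_norm_greedy_max: "1 \<le> m \<Longrightarrow> norm (greedy_sum e m y) \<le> norm (greedy_max e m y)"
  by (intro norm_le_norm_of_labs_le labs_greedy_sum_le_greedy_max) auto

lemma norm_greedy_max_le:
  assumes "basic_sequence e" "uniformly_quasi_greedy e" "y \<in> cspan e" "1 \<le> m"
  shows "norm (greedy_max e m y) \<le> C_uqg e * norm y"
  unfolding C_uqg_def
proof (rule norm_le_Sup_unit_sphere_mult_norm[OF _ _ assms(4,3)])
  show "bdd_above {norm (greedy_max e m x) | m x. 1 \<le> m \<and> x \<in> cspan e \<and> norm x = 1}"
    using assms(2) by (simp add: uniformly_quasi_greedy_def)
qed (rule greedy_max_scaleR[OF assms(1)])

lemma bdd_above_greedy_sum:
  assumes "uniformly_quasi_greedy e"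
  shows "bdd_above {norm (greedy_sum e m x) | m x. 1 \<le> m \<and> x \<in> cspan e \<and> norm x = 1}"
proof -
  obtain M where M: "\<And>m x. 1 \<le> m \<Longrightarrow> x \<in> cspan e \<Longrightarrow> norm x = 1 \<Longrightarrow> norm (greedy_max e m x) \<le> M"
    using assms unfolding uniformly_quasi_greedy_def bdd_above_def by blast
  have "norm (greedy_sum e m x) \<le> M" if "1 \<le> m" "x \<in> cspan e" "norm x = 1" for m x
    using M[OF that] norm_greedy_sum_le_norm_greedy_max[OF that(1), of e x] by linarith
  thus ?thesis unfolding bdd_above_def by blast
qed

lemma norm_greedy_sum_le:
  assumes "basic_sequence e" "uniformly_quasi_greedy e" "y \<in> cspan e" "1 \<le> m"
  shows "norm (greedy_sum e m y) \<le> C_qg e * norm y"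
  unfolding C_qg_def
  by (rule norm_le_Sup_unit_sphere_mult_norm[OF bdd_above_greedy_sum[OF assms(2)]
        greedy_sum_scaleR[OF assms(1)] assms(4,3)])

lemma unit_vector_in_cspan:
  assumes "semi_normalized e" obtains y where "y \<in> cspan e" "norm y = 1"
proof -
  obtain c where "0 < c" "c \<le> norm (e 0)" using assms by (auto simp: semi_normalized_def)
  hence "e 0 \<noteq> 0" by auto
  moreover have "e 0 \<in> cspan e" using sum_in_cspan[where F = "{0}" and c = "\<lambda>_. 1"] by simp
  ultimately show ?thesis using that[of "(1 / norm (e 0)) *\<^sub>R e 0"] cspan_scaleR by auto
qed

lemma C_qg_nonneg:
  assumes "basic_sequence e" "semi_normalized e" "uniformly_quasi_greedy e" shows "0 \<le> C_qg e"
proof -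
  obtain y where y: "y \<in> cspan e" "norm y = 1" using unit_vector_in_cspan[OF assms(2)] .
  have "norm (greedy_sum e 1 y) \<le> C_qg e * norm y" by (rule norm_greedy_sum_le[OF assms(1,3) y(1)]) simp
  hence "norm (greedy_sum e 1 y) \<le> C_qg e" using y(2) by simp
  thus ?thesis using norm_ge_zero order_trans by blast
qed

lemma C_uqg_nonneg:
  assumes "basic_sequence e" "semi_normalized e" "uniformly_quasi_greedy e" shows "0 \<le> C_uqg e"
proof -
  obtain y where y: "y \<in> cspan e" "norm y = 1" using unit_vector_in_cspan[OF assms(2)] .
  have "norm (greedy_max e 1 y) \<le> C_uqg e * norm y" by (rule norm_greedy_max_le[OF assms(1,3) y(1)]) simp
  hence "norm (greedy_max e 1 y) \<le> C_uqg e" using y(2) by simp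
  thus ?thesis using norm_ge_zero order_trans by blast
qed

section \<open>Estimates for signed indicator sums\<close>

lemma field_le_mult_epsilon:
  fixes x y c :: real
  assumes "\<And>\<delta>. 0 < \<delta> \<Longrightarrow> x \<le> y + \<delta> * c"
  shows "x \<le> y"
proof (rule field_le_epsilon)
  fix \<epsilon> :: real assume "0 < \<epsilon>"
  moreover have "\<epsilon> * c \<le> \<epsilon> * (\<bar>c\<bar> + 1)" using \<open>0 < \<epsilon>\<close> by (intro mult_left_mono) auto
  ultimately have "0 < \<epsilon> / (\<bar>c\<bar> + 1)" "\<epsilon> / (\<bar>c\<bar> + 1) * c \<le> \<epsilon>"
    by (simp_all add: field_simps add_pos_nonneg)
  thus "x \<le> y + \<epsilon>" using assms[of "\<epsilon> / (\<bar>c\<bar> + 1)"] by linarith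
qed

lemma norm_sum_scaleR_le:
  "(\<And>n. n \<in> A \<Longrightarrow> \<bar>r n\<bar> \<le> \<delta>) \<Longrightarrow> norm (\<Sum>n\<in>A. r n *\<^sub>R v n) \<le> \<delta> * (\<Sum>n\<in>A. norm (v n))"
  unfolding sum_distrib_left
  by (rule order_trans[OF norm_sum sum_mono]) (simp add: mult_right_mono)

lemma norm_sum_nondecreasing_weights_le:
  fixes d :: "nat \<Rightarrow> 'a::real_normed_vector"
  assumes mono: "\<And>j. Suc j < N \<Longrightarrow> w j \<le> w (Suc j)"
    and G: "\<And>J. 1 \<le> J \<Longrightarrow> J \<le> N \<Longrightarrow> norm (\<Sum>j<J. d j) \<le> G"
    and w0: "0 \<le> w 0" and W: "\<And>j. j < N \<Longrightarrow> w j \<le> W" and N: "1 \<le> N"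
  shows "norm (\<Sum>j<N. w j *\<^sub>R d j) \<le> 2 * W * G"
proof -
  have abel: "norm ((\<Sum>j<Suc n. w j *\<^sub>R d j) - w n *\<^sub>R (\<Sum>j<Suc n. d j)) \<le> (w n - w 0) * G
      \<and> w 0 \<le> w n" if "Suc n \<le> N" for n
    using that
  proof (induction n)
    case (Suc n)
    let ?E = "(\<Sum>j<Suc n. w j *\<^sub>R d j) - w n *\<^sub>R (\<Sum>j<Suc n. d j)"
    let ?X = "(w (Suc n) - w n) *\<^sub>R (\<Sum>j<Suc n. d j)"
    have IH: "norm ?E \<le> (w n - w 0) * G" "w 0 \<le> w n" using Suc by simp_all
    have step: "w n \<le> w (Suc n)" using mono Suc.prems by simp
    have "norm ?X \<le> (w (Suc n) - w n) * G"
      using G[of "Suc n"] Suc.prems step by (simp add: mult_left_mono)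
    hence "norm (?E - ?X) \<le> (w (Suc n) - w 0) * G"
      using IH(1) norm_triangle_ineq4[of ?E ?X] by (simp add: algebra_simps)
    moreover have "(\<Sum>j<Suc (Suc n). w j *\<^sub>R d j) - w (Suc n) *\<^sub>R (\<Sum>j<Suc (Suc n). d j)
        = ?E - ?X"
      by (simp add: algebra_simps)
    ultimately show ?case using IH(2) step by (simp only:) simp
  qed simp
  obtain n where n: "N = Suc n" using N by (cases N) auto
  have G0: "0 \<le> G" using G[of 1] N norm_ge_zero order_trans by blast
  have w: "0 \<le> w n" "w n \<le> W" "w n - w 0 \<le> W" using abel[of n] W[of n] w0 n by simp_all
  have "norm (w n *\<^sub>R (\<Sum>j<N. d j)) \<le> w n * G"
    using G[OF N le_refl] w(1) by (simp add: mult_left_mono)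
  hence "norm (\<Sum>j<N. w j *\<^sub>R d j) \<le> (w n - w 0) * G + w n * G"
    using abel[of n] n norm_triangle_sub[of "\<Sum>j<N. w j *\<^sub>R d j" "w n *\<^sub>R (\<Sum>j<N. d j)"]
    by simp
  also have "\<dots> \<le> W * G + W * G" using w G0 by (intro add_mono mult_right_mono)
  finally show ?thesis by (simp add: mult_ac)
qed

definition signed_indicator :: "(nat \<Rightarrow> 'a::real_normed_vector) \<Rightarrow> (nat \<Rightarrow> real) \<Rightarrow> nat set \<Rightarrow> 'a" where
  "signed_indicator e \<epsilon> A = (\<Sum>n\<in>A. \<epsilon> n *\<^sub>R e n)"

(* Abel summation along the greedy ordering of x, which enumerates B first; the weights
   alpha / |coef e n x| increase along it and lie in (0, 1]. *)
lemma norm_signed_indicator_large_coefs_le: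
  assumes bs: "basic_sequence e" and sn: "semi_normalized e" and uq: "uniformly_quasi_greedy e"
    and x: "x \<in> cspan e" and \<alpha>: "0 < \<alpha>"
  shows "\<alpha> * norm (signed_indicator e (\<lambda>n. sgn (coef e n x)) {n. \<alpha> \<le> \<bar>coef e n x\<bar>})
    \<le> 2 * C_qg e * norm x"
proof -
  let ?a = "\<lambda>n. coef e n x" and ?\<rho> = "greedy_ord e x"
  define B where "B = {n. \<alpha> \<le> \<bar>?a n\<bar>}"
  have B: "finite B" "strict_greedy_set ?a B"
    unfolding B_def strict_greedy_set_def using finite_large_coefs[OF bs sn x \<alpha>] by auto
  have in_B: "\<alpha> \<le> \<bar>?a (?\<rho> j)\<bar>" if "j < card B" for j
    using bij_betw_apply[OF bij_betw_greedy_ord[OF B]] that by (simp add: B_def)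
  define w where "w j = \<alpha> / \<bar>?a (?\<rho> j)\<bar>" for j
  have "\<alpha> *\<^sub>R signed_indicator e (\<lambda>n. sgn (?a n)) B = (\<Sum>n\<in>B. (\<alpha> / \<bar>?a n\<bar>) *\<^sub>R (?a n *\<^sub>R e n))"
    unfolding signed_indicator_def scaleR_sum_right
    using \<alpha> by (intro sum.cong refl) (auto simp: B_def sgn_if)
  also have "\<dots> = (\<Sum>j<card B. w j *\<^sub>R (?a (?\<rho> j) *\<^sub>R e (?\<rho> j)))"
    unfolding w_def by (rule sum.reindex_bij_betw[OF bij_betw_greedy_ord[OF B], symmetric])
  finally have eq: "\<alpha> *\<^sub>R signed_indicator e (\<lambda>n. sgn (?a n)) B = \<dots>" .
  show ?thesis
  proof (cases "card B = 0")
    case True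
    hence "B = {}" using B(1) by simp
    thus ?thesis using C_qg_nonneg[OF bs sn uq] by (simp add: B_def[symmetric] signed_indicator_def)
  next
    case False
    have "norm (\<Sum>j<card B. w j *\<^sub>R (?a (?\<rho> j) *\<^sub>R e (?\<rho> j))) \<le> 2 * 1 * (C_qg e * norm x)"
    proof (rule norm_sum_nondecreasing_weights_le)
      show "w j \<le> w (Suc j)" if "Suc j < card B" for j
        unfolding w_def using greedy_ord_coef_antimono[OF B that] in_B[OF that] \<alpha>
        by (intro divide_left_mono mult_pos_pos) auto
      show "norm (\<Sum>j<J. ?a (?\<rho> j) *\<^sub>R e (?\<rho> j)) \<le> C_qg e * norm x" if "1 \<le> J" for J
        using norm_greedy_sum_le[OF bs uq x that] by (simp add: greedy_sum_def)
      show "w j \<le> 1" if "j < card B" for j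
        using in_B[OF that] \<alpha> by (simp add: w_def)
    qed (use False \<alpha> in \<open>auto simp: w_def\<close>)
    hence "norm (\<alpha> *\<^sub>R signed_indicator e (\<lambda>n. sgn (?a n)) B) \<le> 2 * C_qg e * norm x"
      unfolding eq by simp
    thus ?thesis using \<alpha> by (simp add: B_def)
  qed
qed

lemma signed_indicator_add_scaleR_subset:
  assumes "finite B" "D \<subseteq> B"
  shows "signed_indicator e \<epsilon> B + \<delta> *\<^sub>R signed_indicator e \<epsilon> D
    = (\<Sum>n\<in>B. (if n \<in> D then (1 + \<delta>) * \<epsilon> n else \<epsilon> n) *\<^sub>R e n)"
proof -
  have "\<delta> *\<^sub>R signed_indicator e \<epsilon> D = (\<Sum>n\<in>B. (if n \<in> D then \<delta> * \<epsilon> n else 0) *\<^sub>R e n)"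
    unfolding signed_indicator_def scaleR_sum_right using assms
    by (simp add: if_distrib[of "\<lambda>t. t *\<^sub>R _"] sum.If_cases Int_absorb1)
  hence "signed_indicator e \<epsilon> B + \<delta> *\<^sub>R signed_indicator e \<epsilon> D
      = (\<Sum>n\<in>B. \<epsilon> n *\<^sub>R e n + (if n \<in> D then \<delta> * \<epsilon> n else 0) *\<^sub>R e n)"
    by (simp add: signed_indicator_def sum.distrib)
  also have "\<dots> = (\<Sum>n\<in>B. (if n \<in> D then (1 + \<delta>) * \<epsilon> n else \<epsilon> n) *\<^sub>R e n)"
    by (intro sum.cong) (auto simp: algebra_simps)
  finally show ?thesis .
qed

lemma greedy_sum_signed_indicator_add_scaleR_subset:
  assumes bs: "basic_sequence e" and B: "finite B" "D \<subseteq> B"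
    and \<epsilon>: "\<And>n. n \<in> B \<Longrightarrow> \<bar>\<epsilon> n\<bar> = 1" and \<delta>: "0 < \<delta>"
  shows "greedy_sum e (card D) (signed_indicator e \<epsilon> B + \<delta> *\<^sub>R signed_indicator e \<epsilon> D)
    = (1 + \<delta>) *\<^sub>R signed_indicator e \<epsilon> D"
proof -
  define c where "c n = (if n \<in> D then (1 + \<delta>) * \<epsilon> n else \<epsilon> n)" for n
  let ?w = "\<Sum>n\<in>B. c n *\<^sub>R e n"
  have coef_w: "coef e k ?w = (if k \<in> B then c k else 0)" for k
    by (rule coef_sum[OF bs B(1)])
  have "strict_greedy_set (\<lambda>k. coef e k ?w) D"
    unfolding strict_greedy_set_def coef_w using B(2) \<epsilon> \<delta> by (auto simp: c_def abs_mult)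
  hence "greedy_sum e (card D) ?w = (\<Sum>n\<in>D. coef e n ?w *\<^sub>R e n)"
    using B finite_subset by (intro greedy_sum_strict_greedy_set) auto
  also have "\<dots> = (1 + \<delta>) *\<^sub>R signed_indicator e \<epsilon> D"
    unfolding signed_indicator_def scaleR_sum_right coef_w using B(2)
    by (intro sum.cong) (auto simp: c_def)
  finally show ?thesis unfolding signed_indicator_add_scaleR_subset[OF B] c_def .
qed

lemma norm_signed_indicator_subset_le:
  assumes bs: "basic_sequence e" and sn: "semi_normalized e" and uq: "uniformly_quasi_greedy e"
    and B: "finite B" "D \<subseteq> B" and \<epsilon>: "\<And>n. n \<in> B \<Longrightarrow> \<bar>\<epsilon> n\<bar> = 1"
  shows "norm (signed_indicator e \<epsilon> D) \<le> C_qg e * norm (signed_indicator e \<epsilon> B)"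
proof (cases "D = {}")
  case True thus ?thesis using C_qg_nonneg[OF bs sn uq] by (simp add: signed_indicator_def)
next
  case False
  hence D: "1 \<le> card D" using B finite_subset by (fastforce simp: Suc_le_eq card_gt_0_iff)
  let ?I = "signed_indicator e \<epsilon>"
  show ?thesis
  proof (rule field_le_mult_epsilon)
    fix \<delta> :: real assume \<delta>: "0 < \<delta>"
    have "?I B + \<delta> *\<^sub>R ?I D \<in> cspan e"
      unfolding signed_indicator_add_scaleR_subset[OF B] by (rule sum_in_cspan)
    from norm_greedy_sum_le[OF bs uq this D]
    have "(1 + \<delta>) * norm (?I D) \<le> C_qg e * norm (?I B + \<delta> *\<^sub>R ?I D)"
      using \<delta> by (simp add: greedy_sum_signed_indicator_add_scaleR_subset[OF bs B \<epsilon> \<delta>])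
    also have "\<dots> \<le> C_qg e * (norm (?I B) + \<delta> * norm (?I D))"
      using \<delta> norm_triangle_ineq[of "?I B" "\<delta> *\<^sub>R ?I D"]
      by (intro mult_left_mono C_qg_nonneg[OF bs sn uq]) simp_all
    finally have "norm (?I D) + \<delta> * norm (?I D) \<le> C_qg e * norm (?I B) + \<delta> * (C_qg e * norm (?I D))"
      by (simp add: algebra_simps)
    moreover have "0 \<le> \<delta> * norm (?I D)" using \<delta> by simp
    ultimately show "norm (?I D) \<le> C_qg e * norm (?I B) + \<delta> * (C_qg e * norm (?I D))"
      by linarith
  qed
qed

lemma greedy_sum_decreasing_list:
  assumes bs: "basic_sequence e" and ds: "distinct ds" "sorted_wrt (\<lambda>m n. \<bar>c n\<bar> < \<bar>c m\<bar>) ds"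
    and nz: "\<And>n. n \<in> set ds \<Longrightarrow> c n \<noteq> 0" and J: "J \<le> length ds"
  shows "greedy_sum e J (\<Sum>n\<in>set ds. c n *\<^sub>R e n) = (\<Sum>j<J. c (ds ! j) *\<^sub>R e (ds ! j))"
proof -
  let ?z = "\<Sum>n\<in>set ds. c n *\<^sub>R e n" and ?S = "set (take J ds)"
  have coef_z: "coef e k ?z = (if k \<in> set ds then c k else 0)" for k
    by (rule coef_sum[OF bs]) simp
  have "strict_greedy_set (\<lambda>k. coef e k ?z) ?S"
    unfolding strict_greedy_set_def
  proof (intro ballI allI impI)
    fix n k assume n: "n \<in> ?S" and k: "k \<notin> ?S"
    obtain j where j: "j < J" "n = ds ! j" using n J by (auto simp: in_set_conv_nth)
    have n_ds: "n \<in> set ds" using j J by simp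
    show "\<bar>coef e k ?z\<bar> < \<bar>coef e n ?z\<bar>"
    proof (cases "k \<in> set ds")
      case False thus ?thesis using nz[OF n_ds] n_ds by (simp add: coef_z)
    next
      case True
      then obtain j' where j': "j' < length ds" "k = ds ! j'" by (auto simp: in_set_conv_nth)
      have "\<not> j' < J"
      proof
        assume "j' < J"
        hence "k \<in> ?S" using j' by (auto simp: in_set_conv_nth intro!: exI[of _ j'])
        thus False using k by simp
      qed
      hence "\<bar>c k\<bar> < \<bar>c n\<bar>" using sorted_wrt_nth_less[OF ds(2), of j j'] j j' by simp
      thus ?thesis using True n_ds by (simp add: coef_z)
    qed
  qed
  moreover have "card ?S = J" using ds J by (simp add: distinct_card)
  ultimately have "greedy_sum e J ?z = (\<Sum>n\<in>?S. coef e n ?z *\<^sub>R e n)"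
    using greedy_sum_strict_greedy_set[of ?S] by simp
  also have "\<dots> = (\<Sum>n\<in>?S. c n *\<^sub>R e n)"
    by (intro sum.cong) (auto simp: coef_z dest: in_set_takeD)
  also have "\<dots> = (\<Sum>j<J. c (ds ! j) *\<^sub>R e (ds ! j))"
    using ds(1) J by (simp add: sum_set_eq_sum_nth)
  finally show ?thesis .
qed

(* The prefixes of ds are greedy sets of the perturbed vector, so each prefix sum of the signs
   differs from a greedy sum by at most the sum of (t n - 1) |e n|. *)
lemma labs_prefix_sum_le_perturbed:
  fixes e :: "nat \<Rightarrow> 'a::banach_lattice"
  assumes bs: "basic_sequence e" and ds: "distinct ds" "ds \<noteq> []"
    and \<epsilon>: "\<And>n. n \<in> set ds \<Longrightarrow> \<bar>\<epsilon> n\<bar> = 1" and t: "\<And>n. 1 \<le> t n"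
    and dec: "sorted_wrt (\<lambda>m n. t n < t m) ds" and J: "J \<le> length ds"
  shows "labs (\<Sum>j<J. \<epsilon> (ds ! j) *\<^sub>R e (ds ! j))
    \<le> greedy_max e (length ds) (\<Sum>n\<in>set ds. (\<epsilon> n * t n) *\<^sub>R e n) + (\<Sum>n\<in>set ds. (t n - 1) *\<^sub>R labs (e n))"
proof -
  let ?z = "\<Sum>n\<in>set ds. (\<epsilon> n * t n) *\<^sub>R e n" and ?r = "\<lambda>n. (t n - 1) *\<^sub>R labs (e n)"
  have abs_ds: "\<bar>\<epsilon> n * t n\<bar> = t n" if "n \<in> set ds" for n
    using \<epsilon>[OF that] t[of n] by (simp add: abs_mult)
  have "greedy_sum e J ?z = (\<Sum>j<J. (\<epsilon> (ds ! j) * t (ds ! j)) *\<^sub>R e (ds ! j))"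
  proof (rule greedy_sum_decreasing_list[OF bs ds(1) _ _ J])
    show "sorted_wrt (\<lambda>m n. \<bar>\<epsilon> n * t n\<bar> < \<bar>\<epsilon> m * t m\<bar>) ds"
      using dec by (rule sorted_wrt_mono_rel[rotated]) (simp add: abs_ds)
    show "\<epsilon> n * t n \<noteq> 0" if "n \<in> set ds" for n
      using abs_ds[OF that] t[of n] by auto
  qed
  hence "labs (\<Sum>j<J. \<epsilon> (ds ! j) *\<^sub>R e (ds ! j))
      = labs (greedy_sum e J ?z - (\<Sum>j<J. (\<epsilon> (ds ! j) * (t (ds ! j) - 1)) *\<^sub>R e (ds ! j)))"
    by (simp add: sum_subtractf[symmetric] algebra_simps)
  also have "\<dots> \<le> labs (greedy_sum e J ?z) + labs (\<Sum>j<J. (\<epsilon> (ds ! j) * (t (ds ! j) - 1)) *\<^sub>R e (ds ! j))"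
    by (rule labs_diff_le)
  also have "\<dots> \<le> greedy_max e (length ds) ?z + (\<Sum>n\<in>set ds. ?r n)"
  proof (rule add_mono)
    show "labs (greedy_sum e J ?z) \<le> greedy_max e (length ds) ?z"
      using J ds(2) by (intro labs_greedy_sum_le_greedy_max) (auto simp: Suc_le_eq)
    have "labs (\<Sum>j<J. (\<epsilon> (ds ! j) * (t (ds ! j) - 1)) *\<^sub>R e (ds ! j))
        \<le> (\<Sum>j<J. labs ((\<epsilon> (ds ! j) * (t (ds ! j) - 1)) *\<^sub>R e (ds ! j)))"
      by (rule labs_sum_le)
    also have "\<dots> = (\<Sum>j<J. ?r (ds ! j))"
      using \<epsilon> t J by (intro sum.cong) (auto simp: labs_scaleR abs_mult)
    also have "\<dots> \<le> (\<Sum>j<length ds. ?r (ds ! j))"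
      using J t labs_nonneg by (intro sum_mono2 scaleR_nonneg_nonneg) (auto simp: diff_ge_0_iff_ge)
    also have "\<dots> = (\<Sum>n\<in>set ds. ?r n)" using ds(1) by (simp add: sum_set_eq_sum_nth)
    finally show "labs (\<Sum>j<J. (\<epsilon> (ds ! j) * (t (ds ! j) - 1)) *\<^sub>R e (ds ! j)) \<le> \<dots>" .
  qed
  finally show ?thesis .
qed

lemma decreasing_weights_along_list:
  assumes "distinct ns" "0 < \<delta>"
  obtains t :: "nat \<Rightarrow> real"
  where "\<And>n. 1 \<le> t n" "\<And>n. t n - 1 \<le> \<delta>" "sorted_wrt (\<lambda>m n. t n < t m) ns"
proof
  define pos where "pos = the_inv_into {..<length ns} ((!) ns)"
  have pos: "pos (ns ! j) = j" if "j < length ns" for j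
    unfolding pos_def using that assms(1) by (intro the_inv_into_f_f inj_on_nth) auto
  show "sorted_wrt (\<lambda>m n. 1 + \<delta> / (real (pos n) + 1) < 1 + \<delta> / (real (pos m) + 1)) ns"
    unfolding sorted_wrt_iff_nth_less using assms(2) by (simp add: pos divide_strict_left_mono)
qed (use assms(2) in \<open>auto simp: field_simps\<close>)

lemma sup_partial_sums_restrict_le_perturbed:
  fixes e :: "nat \<Rightarrow> 'a::banach_lattice"
  assumes bs: "basic_sequence e" and ns: "distinct ns" "D \<subseteq> set ns" "D \<noteq> {}"
    and \<epsilon>: "\<And>n. n \<in> D \<Longrightarrow> \<bar>\<epsilon> n\<bar> = 1" and t: "\<And>n. 1 \<le> t n"
    and dec: "sorted_wrt (\<lambda>m n. t n < t m) ns"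
  shows "sup_partial_sums ns (\<lambda>n. if n \<in> D then \<epsilon> n *\<^sub>R e n else 0)
    \<le> greedy_max e (card D) (\<Sum>n\<in>D. (\<epsilon> n * t n) *\<^sub>R e n) + (\<Sum>n\<in>D. (t n - 1) *\<^sub>R labs (e n))"
proof (rule sup_partial_sums_le)
  show "ns \<noteq> []" using ns by auto
  define ds where "ds = filter (\<lambda>n. n \<in> D) ns"
  have ds: "distinct ds" "set ds = D" "sorted_wrt (\<lambda>m n. t n < t m) ds"
    using ns(1,2) sorted_wrt_filter[OF dec] by (auto simp: ds_def)
  hence "ds \<noteq> []" "card D = length ds" using ns(3) distinct_card by fastforce+
  fix i assume "1 \<le> i" "i \<le> length ns"
  then obtain J where J: "J \<le> length ds"
    "(\<Sum>k<i. if ns ! k \<in> D then \<epsilon> (ns ! k) *\<^sub>R e (ns ! k) else 0) = (\<Sum>j<J. \<epsilon> (ds ! j) *\<^sub>R e (ds ! j))"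
    using partial_sum_restrict_eq_prefix_sum[of i ns "\<lambda>n. n \<in> D" "\<lambda>n. \<epsilon> n *\<^sub>R e n"]
    unfolding ds_def by blast
  show "labs (\<Sum>k<i. if ns ! k \<in> D then \<epsilon> (ns ! k) *\<^sub>R e (ns ! k) else 0)
      \<le> greedy_max e (card D) (\<Sum>n\<in>D. (\<epsilon> n * t n) *\<^sub>R e n) + (\<Sum>n\<in>D. (t n - 1) *\<^sub>R labs (e n))"
    unfolding J(2) \<open>card D = length ds\<close> unfolding ds(2)[symmetric]
    using \<epsilon> ds(2) by (intro labs_prefix_sum_le_perturbed[OF bs ds(1) \<open>ds \<noteq> []\<close> _ t ds(3) J(1)]) auto
qed

lemma norm_sup_partial_sums_signed_le_perturbed:
  fixes e :: "nat \<Rightarrow> 'a::banach_lattice"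
  assumes bs: "basic_sequence e" and sn: "semi_normalized e" and uq: "uniformly_quasi_greedy e"
    and ns: "distinct ns" "D \<subseteq> set ns" "D \<noteq> {}" and \<epsilon>: "\<And>n. n \<in> D \<Longrightarrow> \<bar>\<epsilon> n\<bar> = 1"
    and \<delta>: "0 < \<delta>"
  shows "norm (sup_partial_sums ns (\<lambda>n. if n \<in> D then \<epsilon> n *\<^sub>R e n else 0))
    \<le> C_uqg e * norm (signed_indicator e \<epsilon> D) + \<delta> * ((C_uqg e + 1) * (\<Sum>n\<in>D. norm (e n)))"
proof -
  obtain t where t: "\<And>n. 1 \<le> t n" "\<And>n. t n - 1 \<le> \<delta>" and dec: "sorted_wrt (\<lambda>m n. t n < t m) ns"
    using decreasing_weights_along_list[OF ns(1) \<delta>] by blast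
  have t_abs: "\<bar>t n - 1\<bar> \<le> \<delta>" for n using t[of n] by simp
  let ?S = "\<Sum>n\<in>D. norm (e n)" and ?z = "\<Sum>n\<in>D. (\<epsilon> n * t n) *\<^sub>R e n"
    and ?R = "\<Sum>n\<in>D. (t n - 1) *\<^sub>R labs (e n)"
  have z: "norm ?z \<le> norm (signed_indicator e \<epsilon> D) + \<delta> * ?S"
  proof -
    let ?X = "\<Sum>n\<in>D. (t n - 1) *\<^sub>R (\<epsilon> n *\<^sub>R e n)"
    have "?z = signed_indicator e \<epsilon> D + ?X"
      unfolding signed_indicator_def sum.distrib[symmetric] by (intro sum.cong) (auto simp: algebra_simps)
    moreover have "norm ?X \<le> \<delta> * ?S"
      using norm_sum_scaleR_le[of D "\<lambda>n. t n - 1" \<delta> "\<lambda>n. \<epsilon> n *\<^sub>R e n"] t_abs \<epsilon> by simp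
    ultimately show ?thesis using norm_triangle_ineq[of "signed_indicator e \<epsilon> D" ?X] by simp
  qed
  have "norm (sup_partial_sums ns (\<lambda>n. if n \<in> D then \<epsilon> n *\<^sub>R e n else 0))
      \<le> norm (greedy_max e (card D) ?z + ?R)"
    using ns by (intro norm_mono_nonneg sup_partial_sums_nonneg
        sup_partial_sums_restrict_le_perturbed[OF bs ns \<epsilon> t(1) dec]) auto
  also have "\<dots> \<le> C_uqg e * norm ?z + \<delta> * ?S"
  proof (rule order_trans[OF norm_triangle_ineq add_mono])
    show "norm (greedy_max e (card D) ?z) \<le> C_uqg e * norm ?z"
      using ns(2,3) finite_subset by (intro norm_greedy_max_le[OF bs uq sum_in_cspan])
        (auto simp: Suc_le_eq card_gt_0_iff)
    show "norm ?R \<le> \<delta> * ?S"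
      using norm_sum_scaleR_le[of D "\<lambda>n. t n - 1" \<delta> "\<lambda>n. labs (e n)"] t_abs by (simp add: norm_labs)
  qed
  also have "\<dots> \<le> C_uqg e * (norm (signed_indicator e \<epsilon> D) + \<delta> * ?S) + \<delta> * ?S"
    using z C_uqg_nonneg[OF bs sn uq] by (simp add: mult_left_mono)
  finally show ?thesis by (simp add: algebra_simps)
qed

lemma norm_sup_partial_sums_signed_le:
  fixes e :: "nat \<Rightarrow> 'a::banach_lattice"
  assumes bs: "basic_sequence e" and sn: "semi_normalized e" and uq: "uniformly_quasi_greedy e"
    and ns: "distinct ns" "ns \<noteq> []" "D \<subseteq> set ns" and \<epsilon>: "\<And>n. n \<in> D \<Longrightarrow> \<bar>\<epsilon> n\<bar> = 1"
  shows "norm (sup_partial_sums ns (\<lambda>n. if n \<in> D then \<epsilon> n *\<^sub>R e n else 0))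
    \<le> C_uqg e * norm (signed_indicator e \<epsilon> D)"
proof (cases "D = {}")
  case True
  thus ?thesis using sup_partial_sums_zero[OF ns(2)] C_uqg_nonneg[OF bs sn uq]
    by (simp add: signed_indicator_def)
next
  case False
  show ?thesis
    by (rule field_le_mult_epsilon)
      (rule norm_sup_partial_sums_signed_le_perturbed[OF bs sn uq ns(1,3) False \<epsilon>])
qed

section \<open>Layer decomposition\<close>

lemma norm_sup_partial_sums_peel_le:
  fixes g :: "nat \<Rightarrow> 'a::banach_lattice"
  assumes ns: "ns \<noteq> []" and \<mu>: "0 \<le> \<mu>"
    and K: "norm (sup_partial_sums ns (\<lambda>n. if n \<in> P then g n else 0)) \<le> K"
  shows "norm (sup_partial_sums ns (\<lambda>n. c n *\<^sub>R g n))
    \<le> \<mu> * K + norm (sup_partial_sums ns (\<lambda>n. (if n \<in> P then c n - \<mu> else c n) *\<^sub>R g n))"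
proof -
  define U where "U = sup_partial_sums ns (\<lambda>n. if n \<in> P then g n else 0)"
  define V where "V = sup_partial_sums ns (\<lambda>n. (if n \<in> P then c n - \<mu> else c n) *\<^sub>R g n)"
  have "(\<lambda>n. c n *\<^sub>R g n)
      = (\<lambda>n. \<mu> *\<^sub>R (if n \<in> P then g n else 0) + (if n \<in> P then c n - \<mu> else c n) *\<^sub>R g n)"
    by (auto simp: algebra_simps)
  hence "sup_partial_sums ns (\<lambda>n. c n *\<^sub>R g n)
      \<le> sup_partial_sums ns (\<lambda>n. \<mu> *\<^sub>R (if n \<in> P then g n else 0)) + V"
    unfolding V_def by (simp only: sup_partial_sums_add_le[OF ns])
  also have "\<dots> \<le> \<mu> *\<^sub>R U + V"
    unfolding U_def by (intro add_right_mono sup_partial_sums_scaleR_le[OF ns \<mu>])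
  finally have "norm (sup_partial_sums ns (\<lambda>n. c n *\<^sub>R g n)) \<le> norm (\<mu> *\<^sub>R U + V)"
    by (rule norm_mono_nonneg[OF sup_partial_sums_nonneg[OF ns]])
  also have "\<dots> \<le> \<mu> * norm U + norm V"
    using norm_triangle_ineq[of "\<mu> *\<^sub>R U" V] \<mu> by simp
  also have "\<dots> \<le> \<mu> * K + norm V"
    using K \<mu> by (simp add: U_def mult_left_mono)
  finally show ?thesis by (simp add: V_def)
qed

lemma norm_sup_partial_sums_weighted_le:
  fixes g :: "nat \<Rightarrow> 'a::banach_lattice"
  assumes ns: "ns \<noteq> []"
    and K: "\<And>D. D \<subseteq> set ns \<Longrightarrow> norm (sup_partial_sums ns (\<lambda>n. if n \<in> D then g n else 0)) \<le> K"
  shows "(\<And>n. n \<in> set ns \<Longrightarrow> 0 \<le> c n) \<Longrightarrow>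
    norm (sup_partial_sums ns (\<lambda>n. c n *\<^sub>R g n)) \<le> Max (c ` set ns) * K"
proof (induction "card {n \<in> set ns. 0 < c n}" arbitrary: c rule: less_induct)
  \<comment> \<open>peel off the smallest positive weight on its support\<close>
  case (less c)
  define P where "P = {n \<in> set ns. 0 < c n}"
  have K0: "0 \<le> K" using K[of "{}"] norm_ge_zero order_trans by blast
  obtain m where m: "m \<in> set ns" using ns by (cases ns) auto
  have "c m \<le> Max (c ` set ns)" using m by (intro Max_ge) auto
  hence Max0: "0 \<le> Max (c ` set ns)" using less.prems[OF m] by linarith
  show ?case
  proof (cases "P = {}")
    case True
    hence "sup_partial_sums ns (\<lambda>n. c n *\<^sub>R g n) = sup_partial_sums ns (\<lambda>n. if n \<in> {} then g n else 0)"
      using less.prems by (intro sup_partial_sums_cong) (force simp: P_def)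
    thus ?thesis using K[of "{}"] Max0 K0 by (simp add: sup_partial_sums_zero[OF ns])
  next
    case False
    define \<mu> where "\<mu> = Min (c ` P)"
    have "finite P" by (simp add: P_def)
    then obtain n0 where n0: "n0 \<in> P" "c n0 = \<mu>"
      using obtains_MIN[OF _ False, of c] unfolding \<mu>_def by metis
    have \<mu>: "0 < \<mu>" "\<And>n. n \<in> P \<Longrightarrow> \<mu> \<le> c n" using n0 by (auto simp: P_def \<mu>_def)
    define c' where "c' n = (if n \<in> P then c n - \<mu> else c n)" for n
    have "{n \<in> set ns. 0 < c' n} \<subset> P" using n0 \<mu> by (auto simp: P_def c'_def)
    hence "card {n \<in> set ns. 0 < c' n} < card {n \<in> set ns. 0 < c n}"
      by (intro psubset_card_mono) (simp_all add: P_def)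
    moreover have "\<And>n. n \<in> set ns \<Longrightarrow> 0 \<le> c' n" using less.prems \<mu>(2) by (simp add: c'_def)
    ultimately have IH: "norm (sup_partial_sums ns (\<lambda>n. c' n *\<^sub>R g n)) \<le> Max (c' ` set ns) * K"
      by (rule less.hyps)
    have "Max (c' ` set ns) \<le> Max (c ` set ns) - \<mu>"
    proof (rule Max.boundedI)
      show "finite (c' ` set ns)" "c' ` set ns \<noteq> {}" using ns by simp_all
      fix y assume "y \<in> c' ` set ns"
      then obtain n where n: "n \<in> set ns" "y = c' n" by blast
      have "c n \<le> Max (c ` set ns)" "c n0 \<le> Max (c ` set ns)"
        using n(1) n0(1) by (auto simp: P_def intro!: Max_ge)
      thus "y \<le> Max (c ` set ns) - \<mu>" using n less.prems[OF n(1)] n0(2) by (auto simp: c'_def P_def)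
    qed
    hence "norm (sup_partial_sums ns (\<lambda>n. c' n *\<^sub>R g n)) \<le> (Max (c ` set ns) - \<mu>) * K"
      using IH K0 by (meson mult_right_mono order_trans)
    moreover have "norm (sup_partial_sums ns (\<lambda>n. c n *\<^sub>R g n))
        \<le> \<mu> * K + norm (sup_partial_sums ns (\<lambda>n. c' n *\<^sub>R g n))"
      unfolding c'_def using K[of P] \<mu>(1) by (intro norm_sup_partial_sums_peel_le[OF ns]) (auto simp: P_def)
    ultimately show ?thesis by (simp add: algebra_simps)
  qed
qed

lemma norm_sup_partial_sums_sign_layer_le:
  fixes e :: "nat \<Rightarrow> 'a::banach_lattice"
  assumes bs: "basic_sequence e" and sn: "semi_normalized e" and uq: "uniformly_quasi_greedy e"
    and x: "x \<in> cspan e" and \<alpha>: "0 < \<alpha>" and ns: "distinct ns" "ns \<noteq> []" "D \<subseteq> set ns"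
    and large: "\<And>n. n \<in> D \<Longrightarrow> \<alpha> \<le> \<bar>coef e n x\<bar>"
  shows "\<alpha> * norm (sup_partial_sums ns (\<lambda>n. if n \<in> D then sgn (coef e n x) *\<^sub>R e n else 0))
    \<le> 2 * (C_qg e)\<^sup>2 * C_uqg e * norm x"
proof -
  let ?s = "\<lambda>n. sgn (coef e n x)" and ?B = "{n. \<alpha> \<le> \<bar>coef e n x\<bar>}"
  have sgn_B: "\<bar>?s n\<bar> = 1" if "n \<in> ?B" for n using that \<alpha> by (auto simp: abs_sgn_eq)
  have "norm (sup_partial_sums ns (\<lambda>n. if n \<in> D then ?s n *\<^sub>R e n else 0))
      \<le> C_uqg e * norm (signed_indicator e ?s D)"
    using large sgn_B by (intro norm_sup_partial_sums_signed_le[OF bs sn uq ns]) auto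
  also have "\<dots> \<le> C_uqg e * (C_qg e * norm (signed_indicator e ?s ?B))"
    using large sgn_B finite_large_coefs[OF bs sn x \<alpha>] C_uqg_nonneg[OF bs sn uq]
    by (intro mult_left_mono norm_signed_indicator_subset_le[OF bs sn uq]) auto
  finally have "\<alpha> * norm (sup_partial_sums ns (\<lambda>n. if n \<in> D then ?s n *\<^sub>R e n else 0))
      \<le> C_uqg e * C_qg e * (\<alpha> * norm (signed_indicator e ?s ?B))"
    using \<alpha> by (simp add: mult_left_mono mult_ac)
  also have "\<dots> \<le> C_uqg e * C_qg e * (2 * C_qg e * norm x)"
    using C_uqg_nonneg[OF bs sn uq] C_qg_nonneg[OF bs sn uq]
    by (intro mult_left_mono norm_signed_indicator_large_coefs_le[OF bs sn uq x \<alpha>]) auto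
  finally show ?thesis by (simp add: power2_eq_square mult_ac)
qed

lemma norm_P_vee_le:
  fixes e :: "nat \<Rightarrow> 'a::banach_lattice"
  assumes bs: "basic_sequence e" and sn: "semi_normalized e" and uq: "uniformly_quasi_greedy e"
    and x: "x \<in> cspan e" and ns: "ns \<noteq> []" "distinct ns" "set ns \<subseteq> supp e x"
  shows "norm (P_vee e ns x) \<le>
    2 * (C_qg e)\<^sup>2 * C_uqg e
      * (Max ((\<lambda>n. \<bar>coef e n x\<bar>) ` set ns) / Min ((\<lambda>n. \<bar>coef e n x\<bar>) ` set ns)) * norm x"
proof -
  let ?a = "\<lambda>n. coef e n x"
  define \<alpha> where "\<alpha> = Min ((\<lambda>n. \<bar>?a n\<bar>) ` set ns)"
  define K where "K = 2 * (C_qg e)\<^sup>2 * C_uqg e * norm x / \<alpha>"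
  have \<alpha>: "0 < \<alpha>" "\<And>n. n \<in> set ns \<Longrightarrow> \<alpha> \<le> \<bar>?a n\<bar>"
    using ns Min_in[of "(\<lambda>n. \<bar>?a n\<bar>) ` set ns"] by (auto simp: \<alpha>_def supp_def subset_iff)
  have "P_vee e ns x = sup_partial_sums ns (\<lambda>n. \<bar>?a n\<bar> *\<^sub>R (sgn (?a n) *\<^sub>R e n))"
    by (simp add: P_vee_def sup_partial_sums_def abs_mult_sgn)
  also have "norm \<dots> \<le> Max ((\<lambda>n. \<bar>?a n\<bar>) ` set ns) * K"
  proof (rule norm_sup_partial_sums_weighted_le[OF ns(1)])
    fix D assume "D \<subseteq> set ns"
    hence "\<alpha> * norm (sup_partial_sums ns (\<lambda>n. if n \<in> D then sgn (?a n) *\<^sub>R e n else 0))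
        \<le> 2 * (C_qg e)\<^sup>2 * C_uqg e * norm x"
      using \<alpha> by (intro norm_sup_partial_sums_sign_layer_le[OF bs sn uq x \<alpha>(1) ns(2,1)]) auto
    thus "norm (sup_partial_sums ns (\<lambda>n. if n \<in> D then sgn (?a n) *\<^sub>R e n else 0)) \<le> K"
      using \<alpha>(1) by (simp add: K_def pos_le_divide_eq mult.commute)
  qed simp
  finally show ?thesis by (simp add: K_def \<alpha>_def mult_ac)
qed

theorem corollary3p24:
  fixes e :: "nat \<Rightarrow> 'a::banach_lattice" and x :: 'a and ns :: "nat list"
  assumes "basic_sequence e" and "semi_normalized e" and "uniformly_quasi_greedy e"
    and "x \<in> cspan e"
    and "ns \<noteq> []" and "distinct ns" and "set ns \<subseteq> supp e x"
  shows "norm (P_vee e ns x) \<le>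
    8 * (C_qg e)\<^sup>2 * C_uqg e
      * (Max ((\<lambda>n. \<bar>coef e n x\<bar>) ` set ns) / Min ((\<lambda>n. \<bar>coef e n x\<bar>) ` set ns))
      * norm x"
proof -
  let ?X = "(C_qg e)\<^sup>2 * C_uqg e
      * (Max ((\<lambda>n. \<bar>coef e n x\<bar>) ` set ns) / Min ((\<lambda>n. \<bar>coef e n x\<bar>) ` set ns)) * norm x"
  have "norm (P_vee e ns x) \<le> 2 * ?X"
    using norm_P_vee_le[OF assms] by (simp add: mult.assoc)
  moreover have "0 \<le> ?X"
    using C_uqg_nonneg[OF assms(1-3)] assms(5)
    by (intro mult_nonneg_nonneg divide_nonneg_nonneg) (auto simp: Max_ge_iff Min_ge_iff ex_in_conv)
  ultimately show ?thesis by (simp add: mult.assoc)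
qed

end
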